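(* Let $2\le d\le D$ be integers and $\bar d$ a sequence with $d\le d_i\le D$ for all $i$. There is a constant $C$ depending only on $D$ such that for all $n\ge2$, $$\beta_d\le\beta(n)\le\beta_D+\frac{C}{\log n},\qquad\text{where }\ \beta_x=\frac{\log x}{\log\frac{x^2}{x-1}}=\frac{1}{2-\frac{\log(x-1)}{\log x}}.$$
   Context: $p_i=\frac{d_i-1}{d_i^2}$, $k(n)=\min\{k\ge0:p_0p_1\cdots p_kn\le1\}$, $\beta(n)=\frac{\log(d_0d_1\cdots d_{k(n)})}{\log n}$. *)

theory Defs
  imports Complex_Main
begin

definition pfac :: "(nat \<Rightarrow> nat) \<Rightarrow> nat \<Rightarrow> real" where
  "pfac ds i = (real (ds i) - 1) / (real (ds i))^2"

definition kidx :: "(nat \<Rightarrow> nat) \<Rightarrow> nat \<Rightarrow> nat" where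
  "kidx ds n = (LEAST k. (\<Prod>i\<le>k. pfac ds i) * real n \<le> 1)"

definition betan :: "(nat \<Rightarrow> nat) \<Rightarrow> nat \<Rightarrow> real" where
  "betan ds n = ln (\<Prod>i\<le>kidx ds n. real (ds i)) / ln (real n)"

definition betax :: "real \<Rightarrow> real" where
  "betax x = ln x / ln (x^2 / (x - 1))"

end

theory Submission
  imports Defs
begin

(* For an integer x >= 2 put  q(x) = ln (x^2/(x-1)),  so that
   p_i = exp (- q(d_i))  and  ln x = beta_x * q(x)  (this is the definition of beta_x).
   Writing k = k(n), minimality of k gives the two-sided squeeze
       sum_{i<k} q(d_i)  <  ln n  <=  sum_{i<=k} q(d_i),
   while  ln (d_0 ... d_k) = sum_{i<=k} beta_{d_i} q(d_i).
   Since x -> beta_x is increasing on the integers >= 2 (equivalently, ln(x-1)/ln x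
   is increasing, a consequence of ln(x-1) ln(x+1) <= (ln x)^2), the right half of
   the squeeze yields beta_d ln n <= ln (d_0...d_k), and the left half yields
   ln (d_0...d_k) <= beta_D ln n + ln D.  Dividing by ln n gives the theorem with C = ln D. *)

definition ln_ratio :: "real \<Rightarrow> real" where
  "ln_ratio x = ln (x - 1) / ln x"

text \<open>Log-concavity at consecutive points: \<open>ln (x-1) ln (x+1) \<le> (ln x)\<^sup>2\<close>, by AM-GM
  and \<open>(x-1)(x+1) \<le> x\<^sup>2\<close>; this is exactly one step of monotonicity of the ratio.\<close>
lemma ln_ratio_step:
  fixes x :: real assumes "2 \<le> x" shows "ln_ratio x \<le> ln_ratio (x + 1)"
proof -
  have nonneg: "0 \<le> ln (x - 1)" "0 \<le> ln (x + 1)" using assms by simp_all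
  have pos: "0 < ln x" "0 < ln (x + 1)" using assms by simp_all
  have "4 \<le> x * x" using mult_mono[of 2 x 2 x] assms by simp
  have "ln (x - 1) + ln (x + 1) = ln ((x - 1) * (x + 1))" using assms by (simp add: ln_mult)
  also have "\<dots> \<le> ln (x * x)"
    using assms \<open>4 \<le> x * x\<close> by (subst ln_le_cancel_iff) (auto intro: mult_pos_pos simp: algebra_simps)
  also have "\<dots> = 2 * ln x" using assms by (simp add: ln_mult)
  finally have sum_le: "ln (x - 1) + ln (x + 1) \<le> 2 * ln x" .
  have "ln (x - 1) * ln (x + 1) \<le> ((ln (x - 1) + ln (x + 1)) / 2)^2"
    using zero_le_power2[of "ln (x - 1) - ln (x + 1)"]
    by (simp add: power2_eq_square field_simps)
  also have "\<dots> \<le> (ln x)^2" using sum_le nonneg by (intro power_mono) auto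
  finally have "ln (x - 1) * ln (x + 1) \<le> ln x * ln x" by (simp add: power2_eq_square)
  then show ?thesis unfolding ln_ratio_def using pos
    by (simp add: divide_simps algebra_simps)
qed

lemma ln_ratio_mono:
  fixes a b :: nat assumes "2 \<le> a" "a \<le> b" shows "ln_ratio (real a) \<le> ln_ratio (real b)"
  using assms(2)
proof (induction b rule: dec_induct)
  case (step m)
  have "ln_ratio (real m) \<le> ln_ratio (real m + 1)" using assms step by (intro ln_ratio_step) auto
  with step show ?case by (simp add: add.commute)
qed simp

lemma ln_ratio_bounds:
  fixes x :: real assumes "2 \<le> x" shows "0 \<le> ln_ratio x" "ln_ratio x < 1"
  using assms unfolding ln_ratio_def by (auto simp: divide_simps)

lemma betax_ln_ratio:
  fixes x :: real assumes "2 \<le> x" shows "betax x = 1 / (2 - ln_ratio x)"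
proof -
  have "ln (x^2 / (x - 1)) = 2 * ln x - ln (x - 1)"
    using assms by (simp add: ln_div ln_realpow)
  moreover have "0 < ln x" using assms by simp
  ultimately show ?thesis unfolding betax_def ln_ratio_def by (simp add: field_simps)
qed

lemma betax_nonneg: fixes x :: real assumes "2 \<le> x" shows "0 \<le> betax x"
  using betax_ln_ratio[OF assms] ln_ratio_bounds[OF assms] by simp

lemma betax_mono:
  fixes a b :: nat assumes "2 \<le> a" "a \<le> b" shows "betax (real a) \<le> betax (real b)"
proof -
  have "ln_ratio (real a) \<le> ln_ratio (real b)" using ln_ratio_mono[OF assms] .
  moreover have "ln_ratio (real b) < 1" using ln_ratio_bounds assms by simp
  ultimately show ?thesis using assms betax_ln_ratio[of "real a"] betax_ln_ratio[of "real b"]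
    by (simp add: frac_le)
qed

definition qlog :: "nat \<Rightarrow> real" where
  "qlog x = ln (real x ^ 2 / (real x - 1))"

lemma qlog_pos: assumes "2 \<le> x" shows "0 < qlog x"
proof -
  have "qlog x = 2 * ln (real x) - ln (real x - 1)"
    using assms unfolding qlog_def by (simp add: ln_div ln_realpow)
  moreover have "ln (real x - 1) < ln (real x)" "0 < ln (real x)" using assms by simp_all
  ultimately show ?thesis by linarith
qed

lemma ln_eq_betax_qlog: assumes "2 \<le> x" shows "ln (real x) = betax (real x) * qlog x"
  using qlog_pos[OF assms] unfolding betax_def qlog_def by simp

lemma pfac_pos: assumes "2 \<le> ds i" shows "0 < pfac ds i"
  using assms unfolding pfac_def by simp

lemma ln_inverse_prod_pfac:
  assumes "\<forall>i. 2 \<le> ds i"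
  shows "ln (1 / (\<Prod>i\<le>k. pfac ds i)) = (\<Sum>i\<le>k. qlog (ds i))"
proof -
  have "1 / (\<Prod>i\<le>k. pfac ds i) = (\<Prod>i\<le>k. real (ds i) ^ 2 / (real (ds i) - 1))"
    using assms by (simp add: pfac_def prod_dividef)
  moreover have "real (ds i) ^ 2 / (real (ds i) - 1) \<noteq> 0" for i
    using assms[rule_format, of i] by simp
  ultimately show ?thesis by (simp add: ln_prod qlog_def)
qed

lemma ln_prod_ds:
  fixes ds :: "nat \<Rightarrow> nat"
  assumes "\<forall>i. 2 \<le> ds i"
  shows "ln (\<Prod>i\<le>k. real (ds i)) = (\<Sum>i\<le>k. ln (real (ds i)))"
proof -
  have "real (ds i) \<noteq> 0" for i using assms[rule_format, of i] by simp
  then show ?thesis by (subst ln_prod) auto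
qed

text \<open>The set defining \<open>k(n)\<close> is nonempty: since \<open>p\<^sub>i \<le> 1/4\<close>, already \<open>k = n\<close> works.\<close>
lemma prod_pfac_kidx:
  assumes "\<forall>i. 2 \<le> ds i"
  shows "(\<Prod>i\<le>kidx ds n. pfac ds i) * real n \<le> 1"
proof -
  have pfac_le: "pfac ds i \<le> 1/4" for i
  proof -
    have d: "2 \<le> real (ds i)" using assms by (metis of_nat_le_iff of_nat_numeral)
    have "4 * (real (ds i) - 1) \<le> real (ds i) ^ 2"
      using zero_le_power2[of "real (ds i) - 2"] by (simp add: power2_eq_square algebra_simps)
    then show ?thesis using d unfolding pfac_def by (simp add: divide_simps)
  qed
  have "(\<Prod>i\<le>n. pfac ds i) \<le> (1/4)^(Suc n)"
    using pfac_le prod_mono[of "{..n}" "pfac ds" "\<lambda>_. 1/4"] pfac_pos assms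
    by (simp add: less_imp_le)
  moreover have "real n \<le> 4^(Suc n)"
  proof -
    have "real n < 2 ^ n" by simp
    also have "(2::real) ^ n \<le> 4 ^ n" by (rule power_mono) auto
    also have "\<dots> \<le> 4 ^ Suc n" by simp
    finally show ?thesis by simp
  qed
  ultimately have "(\<Prod>i\<le>n. pfac ds i) * real n \<le> (1/4)^(Suc n) * 4^(Suc n)"
    by (intro mult_mono) auto
  then have "(\<Prod>i\<le>n. pfac ds i) * real n \<le> 1" by (simp add: power_mult_distrib[symmetric])
  then show ?thesis unfolding kidx_def by (rule LeastI)
qed

lemma ln_le_sum_qlog_kidx:
  assumes "\<forall>i. 2 \<le> ds i" "1 \<le> n"
  shows "ln (real n) \<le> (\<Sum>i\<le>kidx ds n. qlog (ds i))"
proof -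
  let ?P = "\<Prod>i\<le>kidx ds n. pfac ds i"
  have "0 < ?P" using assms(1) pfac_pos by (simp add: prod_pos)
  then have "real n \<le> 1 / ?P" using prod_pfac_kidx[OF assms(1)] by (simp add: field_simps)
  then have "ln (real n) \<le> ln (1 / ?P)" using \<open>0 < ?P\<close> assms(2) by simp
  then show ?thesis using ln_inverse_prod_pfac[OF assms(1)] by simp
qed

lemma sum_qlog_before_kidx_less:
  assumes "\<forall>i. 2 \<le> ds i" "1 \<le> n" "kidx ds n = Suc j"
  shows "(\<Sum>i\<le>j. qlog (ds i)) < ln (real n)"
proof -
  let ?P = "\<Prod>i\<le>j. pfac ds i"
  have "0 < ?P" using assms(1) pfac_pos by (simp add: prod_pos)
  have "\<not> ?P * real n \<le> 1"
    using assms(3) unfolding kidx_def by (intro not_less_Least) simp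
  then have "1 / ?P < real n" using \<open>0 < ?P\<close> by (simp add: field_simps)
  then have "ln (1 / ?P) < ln (real n)" using \<open>0 < ?P\<close> assms(2) by simp
  then show ?thesis using ln_inverse_prod_pfac[OF assms(1)] by simp
qed

lemma betan_lower:
  assumes "2 \<le> d" "\<forall>i. d \<le> ds i" "2 \<le> n"
  shows "betax (real d) \<le> betan ds n"
proof -
  let ?k = "kidx ds n"
  have ds2: "\<forall>i. 2 \<le> ds i" using assms(1,2) order_trans by blast
  have "betax (real d) * ln (real n) \<le> betax (real d) * (\<Sum>i\<le>?k. qlog (ds i))"
    using ln_le_sum_qlog_kidx[OF ds2] betax_nonneg assms by (intro mult_left_mono) auto
  also have "\<dots> \<le> (\<Sum>i\<le>?k. betax (real (ds i)) * qlog (ds i))"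
    unfolding sum_distrib_left using assms ds2 qlog_pos betax_mono
    by (intro sum_mono mult_right_mono) (auto simp: less_imp_le)
  also have "\<dots> = ln (\<Prod>i\<le>?k. real (ds i))"
    using ds2 by (simp add: ln_prod_ds ln_eq_betax_qlog)
  finally show ?thesis using assms(3) unfolding betan_def by (simp add: field_simps)
qed

text \<open>Upper bound: if \<open>2 \<le> d\<^sub>i \<le> D\<close> then \<open>\<beta>(n) \<le> \<beta>\<^sub>D + ln D / ln n\<close>;
  the last factor \<open>d\<^sub>k\<^sub>(\<^sub>n\<^sub>)\<close> contributes the error term \<open>ln D\<close>.\<close>
lemma betan_upper:
  assumes "\<forall>i. 2 \<le> ds i \<and> ds i \<le> D" "2 \<le> n"
  shows "betan ds n \<le> betax (real D) + ln (real D) / ln (real n)"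
proof -
  let ?k = "kidx ds n"
  have ds2: "\<forall>i. 2 \<le> ds i" and "2 \<le> D" using assms(1) by (auto intro: order_trans)
  have ln_le_D: "ln (real (ds i)) \<le> ln (real D)" for i
    using assms(1)[rule_format, of i] by simp
  have lnn: "0 < ln (real n)" using assms(2) by simp
  have bD: "0 \<le> betax (real D)" using betax_nonneg \<open>2 \<le> D\<close> by simp
  have main: "ln (\<Prod>i\<le>?k. real (ds i)) \<le> betax (real D) * ln (real n) + ln (real D)"
  proof (cases ?k)
    case 0
    have "0 \<le> betax (real D) * ln (real n)" using bD lnn by simp
    then show ?thesis using 0 ln_le_D[of 0] ln_prod_ds[OF ds2] by simp
  next
    case (Suc j)
    have "(\<Sum>i\<le>j. ln (real (ds i))) \<le> (\<Sum>i\<le>j. betax (real D) * qlog (ds i))"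
      using ds2 assms(1) qlog_pos betax_mono ln_eq_betax_qlog
      by (intro sum_mono) (simp add: less_imp_le mult_right_mono)
    also have "\<dots> \<le> betax (real D) * ln (real n)"
      unfolding sum_distrib_left[symmetric]
      using sum_qlog_before_kidx_less[OF ds2 _ Suc] assms(2) bD
      by (intro mult_left_mono) auto
    moreover have "ln (\<Prod>i\<le>?k. real (ds i)) = (\<Sum>i\<le>j. ln (real (ds i))) + ln (real (ds ?k))"
      using Suc ln_prod_ds[OF ds2, of ?k] by simp
    ultimately show ?thesis using ln_le_D[of ?k] by linarith
  qed
  then show ?thesis unfolding betan_def using lnn by (simp add: field_simps)
qed

theorem mainTheorem8:
  fixes D :: nat
  assumes "2 \<le> D"
  shows "\<exists>C::real. \<forall>(d::nat) (ds::nat \<Rightarrow> nat). 2 \<le> d \<longrightarrow> d \<le> D \<longrightarrow>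
           (\<forall>i. d \<le> ds i \<and> ds i \<le> D) \<longrightarrow>
           (\<forall>n::nat. 2 \<le> n \<longrightarrow>
              betax (real d) \<le> betan ds n \<and> betan ds n \<le> betax (real D) + C / ln (real n))"
proof (intro exI[of _ "ln (real D)"] allI impI conjI)
  fix d :: nat and ds :: "nat \<Rightarrow> nat" and n :: nat
  assume d: "2 \<le> d" and range: "\<forall>i. d \<le> ds i \<and> ds i \<le> D" and n: "2 \<le> n"
  show "betax (real d) \<le> betan ds n"
    using betan_lower[OF d _ n] range by blast
  have "\<forall>i. 2 \<le> ds i \<and> ds i \<le> D" using range d by (auto intro: order_trans)
  then show "betan ds n \<le> betax (real D) + ln (real D) / ln (real n)"
    using betan_upper n by blast
qed

end
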